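(* For every finite graph $G=(V,E)$, \[ d_{\mathrm{swap}}(G) \ge \left\lceil \frac{b^2(G) - 2}{2} \right\rceil. \]
   Context: Linear-connectivity swap network model: for $G=(V,E)$ with $|V|=n$, qubits occupy positions $0,\ldots,n-1$ on a line; a configuration is a bijection $\pi:V\to\{0,\ldots,n-1\}$; a swap layer is a set of pairwise disjoint pairs of adjacent positions $\{i,i+1\}$, and applying it exchanges the vertices at the two positions of each pair. A swap network for $G$ is an initial configuration $\pi_0$ (chosen freely) followed by swap layers $L_1,\ldots,L_d$ producing configurations $\pi_0,\ldots,\pi_d$, such that for every edge $\{v,w\}\in E$ there is some $t$ with $|\pi_t(v)-\pi_t(w)|=1$. Its swap depth is $d$, and $d_{\mathrm{swap}}(G)$ is the minimum swap depth over all swap networks for $G$. An order of $V$ is a bijection $r: V \to \{0,\ldots,|V|-1\}$; $R(V)$ is the set of all orders. For $W\subseteq V$, the order bandwidth is $b_r(W)=\max_{w\in W} r(w)-\min_{w\in W} r(w)$. Let $L_2(G)$ be the set of subgraphs of $G$ that are paths with two edges (three distinct vertices $v_1,v_2,v_3$ with $\{v_1,v_2\},\{v_2,v_3\}\in E$), and for $S\in L_2(G)$ let $V_S$ be its vertex set. The graph 2-bandwidth is $b^2(G)=\min_{r\in R(V)}\max_{S\in L_2(G)} b_r(V_S)$. *)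

theory Defs
  imports Complex_Main
begin

definition finite_graph :: "'a set \<Rightarrow> 'a set set \<Rightarrow> bool" where
  "finite_graph V E \<longleftrightarrow> finite V \<and> (\<forall>e\<in>E. e \<subseteq> V \<and> card e = 2)"

definition is_config :: "'a set \<Rightarrow> ('a \<Rightarrow> nat) \<Rightarrow> bool" where
  "is_config V \<pi> \<longleftrightarrow> bij_betw \<pi> V {0..<card V}"

definition swap_layer :: "nat \<Rightarrow> nat set set \<Rightarrow> bool" where
  "swap_layer n L \<longleftrightarrow> (\<forall>P\<in>L. \<exists>i. P = {i, i+1} \<and> i + 1 < n)
     \<and> (\<forall>P\<in>L. \<forall>Q\<in>L. P \<noteq> Q \<longrightarrow> P \<inter> Q = {})"

definition move_pos :: "nat set set \<Rightarrow> nat \<Rightarrow> nat" where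
  "move_pos L p = (if {p, p+1} \<in> L then p + 1
                   else if 0 < p \<and> {p-1, p} \<in> L then p - 1 else p)"

definition apply_layer :: "nat set set \<Rightarrow> ('a \<Rightarrow> nat) \<Rightarrow> ('a \<Rightarrow> nat)" where
  "apply_layer L \<pi> = move_pos L \<circ> \<pi>"

definition config_at :: "('a \<Rightarrow> nat) \<Rightarrow> nat set set list \<Rightarrow> nat \<Rightarrow> ('a \<Rightarrow> nat)" where
  "config_at \<pi>0 Ls t = foldl (\<lambda>\<pi> L. apply_layer L \<pi>) \<pi>0 (take t Ls)"

definition swap_network :: "'a set \<Rightarrow> 'a set set \<Rightarrow> ('a \<Rightarrow> nat) \<Rightarrow> nat set set list \<Rightarrow> bool" where
  "swap_network V E \<pi>0 Ls \<longleftrightarrow> is_config V \<pi>0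
     \<and> (\<forall>L\<in>set Ls. swap_layer (card V) L)
     \<and> (\<forall>e\<in>E. \<exists>v w. e = {v, w} \<and>
          (\<exists>t\<le>length Ls. \<bar>int (config_at \<pi>0 Ls t v) - int (config_at \<pi>0 Ls t w)\<bar> = 1))"

definition d_swap :: "'a set \<Rightarrow> 'a set set \<Rightarrow> nat" where
  "d_swap V E = (LEAST d. \<exists>\<pi>0 Ls. swap_network V E \<pi>0 Ls \<and> length Ls = d)"

definition order_bw :: "('a \<Rightarrow> nat) \<Rightarrow> 'a set \<Rightarrow> nat" where
  "order_bw r W = Max (r ` W) - Min (r ` W)"

definition L2_vsets :: "'a set \<Rightarrow> 'a set set \<Rightarrow> 'a set set" where
  "L2_vsets V E = {{v1, v2, v3} | v1 v2 v3. v1 \<noteq> v2 \<and> v2 \<noteq> v3 \<and> v1 \<noteq> v3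
      \<and> {v1, v2} \<in> E \<and> {v2, v3} \<in> E}"

text \<open>Graph 2-bandwidth (max over an empty set of paths is taken to be 0).\<close>
definition bw2 :: "'a set \<Rightarrow> 'a set set \<Rightarrow> nat" where
  "bw2 V E = Min {Max (insert 0 {order_bw r S | S. S \<in> L2_vsets V E}) | r. is_config V r}"

end

theory Submission
  imports Defs
begin

text \<open>Each layer moves every vertex by at most one position, so after t layers a vertex is
  within distance t of its initial position. If the two edges of a 2-path u-v-w are realised at
  times s and t, the triangle inequality along u, v (at time s), v (at time t), w bounds the
  initial distance of any two of u, v, w by 2d + 2 in a network of depth d. Hence the initial
  configuration of an optimal network is an order of 2-bandwidth at most 2 d_swap + 2.
  A swap network exists at all (so d_swap is a genuine minimum) because each edge can be
  realised by bubbling one endpoint towards the other with single adjacent swaps.\<close>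

lemma move_pos_dist: "\<bar>int (move_pos L p) - int p\<bar> \<le> 1"
  by (simp add: move_pos_def)

lemma swap_layer_pair_less:
  assumes "swap_layer n L" "{p, p + 1} \<in> L"
  shows "p + 1 < n"
proof -
  obtain i where "{p, p + 1} = {i, i + 1}" "i + 1 < n"
    using conjunct1[OF assms(1)[unfolded swap_layer_def]] assms(2) by blast
  then show ?thesis by (auto simp: doubleton_eq_iff)
qed

lemma swap_layer_consecutive_pairs:
  assumes "swap_layer n L" "{p, p + 1} \<in> L"
  shows "{p + 1, p + 2} \<notin> L"
proof
  assume "{p + 1, p + 2} \<in> L"
  moreover have "{p, p + 1} \<noteq> {p + 1, p + 2}"
    by (simp add: doubleton_eq_iff)
  ultimately have "{p, p + 1} \<inter> {p + 1, p + 2} = {}"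
    using conjunct2[OF assms(1)[unfolded swap_layer_def], rule_format, OF assms(2)] by blast
  then show False by simp
qed

lemma move_pos_involution:
  assumes "swap_layer n L"
  shows "move_pos L (move_pos L p) = p"
proof (cases "{p, p + 1} \<in> L")
  case True
  then show ?thesis
    using swap_layer_consecutive_pairs[OF assms True] by (simp add: move_pos_def)
next
  case False
  show ?thesis
  proof (cases "0 < p \<and> {p - 1, p} \<in> L")
    case True
    then obtain q where "p = q + 1" "{q, q + 1} \<in> L"
      by (metis Suc_eq_plus1 Suc_pred')
    then show ?thesis using False by (simp add: move_pos_def)
  qed (use False in \<open>auto simp: move_pos_def\<close>)
qed

lemma move_pos_less:
  assumes "swap_layer n L" "p < n"
  shows "move_pos L p < n"
  using assms swap_layer_pair_less[OF assms(1), of p] by (auto simp: move_pos_def)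

lemma bij_betw_move_pos:
  assumes "swap_layer n L"
  shows "bij_betw (move_pos L) {0..<n} {0..<n}"
  by (rule bij_betw_byWitness[where f' = "move_pos L"])
    (auto simp: move_pos_involution[OF assms] move_pos_less[OF assms])

lemma is_config_apply_layer:
  assumes "is_config V \<pi>" "swap_layer (card V) L"
  shows "is_config V (apply_layer L \<pi>)"
  using assms bij_betw_trans bij_betw_move_pos
  unfolding is_config_def apply_layer_def by blast

lemma config_at_Suc:
  "t < length Ls \<Longrightarrow> config_at \<pi> Ls (Suc t) = apply_layer (Ls ! t) (config_at \<pi> Ls t)"
  by (simp add: config_at_def take_Suc_conv_app_nth)

lemma config_at_Cons_Suc: "config_at \<pi> (L # Ls) (Suc t) = config_at (apply_layer L \<pi>) Ls t"
  by (simp add: config_at_def)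

lemma config_at_append_prefix:
  "t \<le> length Ls \<Longrightarrow> config_at \<pi> (Ls @ Ls') t = config_at \<pi> Ls t"
  by (simp add: config_at_def)

lemma config_at_append_suffix:
  "config_at \<pi> (Ls @ Ls') (length Ls + t) = config_at (config_at \<pi> Ls (length Ls)) Ls' t"
  by (simp add: config_at_def)

lemma is_config_config_at:
  assumes "is_config V \<pi>" "\<forall>L\<in>set Ls. swap_layer (card V) L"
  shows "is_config V (config_at \<pi> Ls t)"
proof (induction t)
  case 0
  then show ?case using assms(1) by (simp add: config_at_def)
next
  case (Suc t)
  show ?case
  proof (cases "t < length Ls")
    case True
    then show ?thesis
      using Suc assms(2) by (simp add: config_at_Suc is_config_apply_layer)
  next
    case False
    then show ?thesis
      using Suc by (simp add: config_at_def)
  qed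
qed

lemma config_at_Suc_dist:
  "\<bar>int (config_at \<pi> Ls (Suc t) v) - int (config_at \<pi> Ls t v)\<bar> \<le> 1"
proof (cases "t < length Ls")
  case True
  then show ?thesis by (simp add: config_at_Suc apply_layer_def move_pos_dist)
next
  case False
  then show ?thesis by (simp add: config_at_def)
qed

lemma config_at_dist_le:
  "s \<le> t \<Longrightarrow> \<bar>int (config_at \<pi> Ls t v) - int (config_at \<pi> Ls s v)\<bar> \<le> int (t - s)"
proof (induction t rule: dec_induct)
  case (step t)
  then show ?case using config_at_Suc_dist[of \<pi> Ls t v] by linarith
qed simp

lemma config_at_dist:
  "\<bar>int (config_at \<pi> Ls t v) - int (config_at \<pi> Ls s v)\<bar> \<le> \<bar>int t - int s\<bar>"
  using config_at_dist_le[of s t \<pi> Ls v] config_at_dist_le[of t s \<pi> Ls v]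
  by (cases "s \<le> t") (auto simp: abs_minus_commute)

definition meets :: "('a \<Rightarrow> nat) \<Rightarrow> nat set set list \<Rightarrow> 'a \<Rightarrow> 'a \<Rightarrow> bool" where
  "meets \<pi> Ls v w \<longleftrightarrow>
     (\<exists>t\<le>length Ls. \<bar>int (config_at \<pi> Ls t v) - int (config_at \<pi> Ls t w)\<bar> = 1)"

lemma swap_network_iff_meets:
  "swap_network V E \<pi> Ls \<longleftrightarrow> is_config V \<pi> \<and> (\<forall>L\<in>set Ls. swap_layer (card V) L)
     \<and> (\<forall>e\<in>E. \<exists>v w. e = {v, w} \<and> meets \<pi> Ls v w)"
  by (simp add: swap_network_def meets_def)

lemma meets_sym: "meets \<pi> Ls v w \<Longrightarrow> meets \<pi> Ls w v"
  by (auto simp: meets_def abs_minus_commute)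

lemma swap_network_meets: "swap_network V E \<pi> Ls \<Longrightarrow> {v, w} \<in> E \<Longrightarrow> meets \<pi> Ls v w"
  unfolding swap_network_iff_meets by (metis doubleton_eq_iff meets_sym)

lemma meets_Cons: "meets (apply_layer L \<pi>) Ls v w \<Longrightarrow> meets \<pi> (L # Ls) v w"
  unfolding meets_def by (metis Suc_le_mono config_at_Cons_Suc length_Cons)

lemma meets_append_left: "meets \<pi> Ls v w \<Longrightarrow> meets \<pi> (Ls @ Ls') v w"
  unfolding meets_def by (metis config_at_append_prefix length_append trans_le_add1)

lemma meets_append_right:
  "meets (config_at \<pi> Ls (length Ls)) Ls' v w \<Longrightarrow> meets \<pi> (Ls @ Ls') v w"
  unfolding meets_def
  by (metis add_le_mono1 config_at_append_suffix length_append add.commute)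

lemma apply_layer_single:
  "apply_layer {{i, i + 1}} \<pi> v =
     (if \<pi> v = i then i + 1 else if \<pi> v = i + 1 then i else \<pi> v)"
  by (auto simp: apply_layer_def move_pos_def doubleton_eq_iff)

lemma swap_layer_single: "i + 1 < n \<Longrightarrow> swap_layer n {{i, i + 1}}"
  by (auto simp: swap_layer_def)

lemma exists_layers_meeting_ordered:
  assumes "\<pi> v < \<pi> w" "\<pi> w < n"
  shows "\<exists>Ls. (\<forall>L\<in>set Ls. swap_layer n L) \<and> meets \<pi> Ls v w"
  using assms
proof (induction "\<pi> w - \<pi> v" arbitrary: \<pi> rule: less_induct)
  case less
  show ?case
  proof (cases "\<pi> w = \<pi> v + 1")
    case True
    then have "meets \<pi> [] v w" by (simp add: meets_def config_at_def)
    then show ?thesis by (metis empty_iff empty_set)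
  next
    case False
    define i where "i = \<pi> w - 1"
    define L where "L = {{i, i + 1}}"
    have i: "\<pi> w = i + 1" "\<pi> v < i"
      using less.prems False by (auto simp: i_def)
    then have L: "swap_layer n L"
      using less.prems swap_layer_single[of i n] by (simp add: L_def)
    have "apply_layer L \<pi> v = \<pi> v" "apply_layer L \<pi> w = i"
      unfolding L_def apply_layer_single using i by auto
    then have "\<exists>Ls. (\<forall>L\<in>set Ls. swap_layer n L) \<and> meets (apply_layer L \<pi>) Ls v w"
      using less.prems i by (intro less.hyps) auto
    then show ?thesis using L meets_Cons by (metis set_ConsD)
  qed
qed

lemma exists_layers_meeting:
  assumes "\<pi> v \<noteq> \<pi> w" "\<pi> v < n" "\<pi> w < n"
  shows "\<exists>Ls. (\<forall>L\<in>set Ls. swap_layer n L) \<and> meets \<pi> Ls v w"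
  using assms exists_layers_meeting_ordered[of \<pi> v w n] exists_layers_meeting_ordered[of \<pi> w v n]
  by (metis linorder_neqE_nat meets_sym)

lemma exists_layers_meeting_edges:
  assumes "finite F" "\<forall>e\<in>F. e \<subseteq> V \<and> card e = 2" "is_config V \<pi>"
  shows "\<exists>Ls. (\<forall>L\<in>set Ls. swap_layer (card V) L) \<and> (\<forall>e\<in>F. \<exists>v w. e = {v, w} \<and> meets \<pi> Ls v w)"
  using assms(1,2)
proof (induction F rule: finite_induct)
  case empty
  show ?case by (intro exI[of _ "[]"]) simp
next
  case (insert e F)
  have "\<forall>e\<in>F. e \<subseteq> V \<and> card e = 2" using insert.prems by simp
  then obtain Ls where Ls: "\<forall>L\<in>set Ls. swap_layer (card V) L"
    "\<forall>e\<in>F. \<exists>v w. e = {v, w} \<and> meets \<pi> Ls v w"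
    using insert.IH by blast
  have "e \<subseteq> V" "card e = 2" using insert.prems by simp_all
  then obtain v w where e: "e = {v, w}" "v \<noteq> w" "v \<in> V" "w \<in> V"
    by (auto simp: card_2_iff)
  define \<pi>' where "\<pi>' = config_at \<pi> Ls (length Ls)"
  have bij: "bij_betw \<pi>' V {0..<card V}"
    using is_config_config_at[OF assms(3) Ls(1)] by (simp add: \<pi>'_def is_config_def)
  then have "\<pi>' v \<noteq> \<pi>' w"
    using e by (meson bij_betw_def inj_on_contraD)
  moreover have "\<pi>' v < card V" "\<pi>' w < card V"
    using bij_betwE[OF bij] e(3,4) by auto
  ultimately obtain Ls' where Ls': "\<forall>L\<in>set Ls'. swap_layer (card V) L" "meets \<pi>' Ls' v w"
    using exists_layers_meeting[of \<pi>' v w "card V"] by blast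
  have "meets \<pi> (Ls @ Ls') v w"
    using Ls'(2) unfolding \<pi>'_def by (rule meets_append_right)
  moreover have "\<forall>e'\<in>F. \<exists>v w. e' = {v, w} \<and> meets \<pi> (Ls @ Ls') v w"
  proof
    fix e' assume "e' \<in> F"
    then obtain a b where "e' = {a, b}" "meets \<pi> Ls a b"
      using Ls(2) by meson
    then show "\<exists>v w. e' = {v, w} \<and> meets \<pi> (Ls @ Ls') v w"
      by (blast intro: meets_append_left)
  qed
  moreover have "\<forall>L\<in>set (Ls @ Ls'). swap_layer (card V) L"
    using Ls(1) Ls'(1) by auto
  ultimately show ?case
    using e(1) by (intro exI[of _ "Ls @ Ls'"]) auto
qed

lemma swap_network_exists:
  assumes "finite_graph V E"
  shows "\<exists>\<pi> Ls. swap_network V E \<pi> Ls"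
proof -
  have V: "finite V" and E: "\<forall>e\<in>E. e \<subseteq> V \<and> card e = 2"
    using assms by (auto simp: finite_graph_def)
  then have "finite E"
    by (meson PowI finite_Pow_iff finite_subset subsetI)
  obtain \<pi> where \<pi>: "is_config V \<pi>"
    using ex_bij_betw_finite_nat[OF V] by (auto simp: is_config_def)
  obtain Ls where "\<forall>L\<in>set Ls. swap_layer (card V) L" "\<forall>e\<in>E. \<exists>v w. e = {v, w} \<and> meets \<pi> Ls v w"
    using exists_layers_meeting_edges[OF \<open>finite E\<close> E \<pi>] by blast
  then show ?thesis
    using \<pi> unfolding swap_network_iff_meets by blast
qed

lemma d_swap_attained:
  assumes "finite_graph V E"
  shows "\<exists>\<pi> Ls. swap_network V E \<pi> Ls \<and> length Ls = d_swap V E"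
  unfolding d_swap_def
  by (rule LeastI_ex) (use swap_network_exists[OF assms] in blast)

lemma meets_dist:
  assumes "meets \<pi> Ls v w"
  shows "\<bar>int (\<pi> v) - int (\<pi> w)\<bar> \<le> 2 * int (length Ls) + 1"
proof -
  obtain t where t: "t \<le> length Ls" "\<bar>int (config_at \<pi> Ls t v) - int (config_at \<pi> Ls t w)\<bar> = 1"
    using assms unfolding meets_def by blast
  have "\<bar>int (config_at \<pi> Ls t x) - int (\<pi> x)\<bar> \<le> int t" for x
    using config_at_dist[of \<pi> Ls t x 0] by (simp add: config_at_def)
  from this[of v] this[of w] t show ?thesis by linarith
qed

lemma meets_path_dist:
  assumes "meets \<pi> Ls u v" "meets \<pi> Ls v w"
  shows "\<bar>int (\<pi> u) - int (\<pi> w)\<bar> \<le> 2 * int (length Ls) + 2"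
proof -
  define P where "P t x = int (config_at \<pi> Ls t x)" for t x
  obtain s where s: "s \<le> length Ls" "\<bar>P s u - P s v\<bar> = 1"
    using assms(1) unfolding meets_def P_def by blast
  obtain t where t: "t \<le> length Ls" "\<bar>P t v - P t w\<bar> = 1"
    using assms(2) unfolding meets_def P_def by blast
  have P0: "P 0 x = int (\<pi> x)" for x
    by (simp add: P_def config_at_def)
  have "\<bar>P s u - P 0 u\<bar> \<le> int s" "\<bar>P s v - P t v\<bar> \<le> \<bar>int s - int t\<bar>" "\<bar>P t w - P 0 w\<bar> \<le> int t"
    using config_at_dist unfolding P_def by (metis diff_zero of_nat_0 abs_of_nat)+
  then show ?thesis using s t unfolding P0[symmetric] by linarith
qed

lemma order_bw_le:
  assumes "finite W" "W \<noteq> {}" "\<And>x y. x \<in> W \<Longrightarrow> y \<in> W \<Longrightarrow> r x \<le> r y + c"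
  shows "order_bw r W \<le> c"
proof -
  have "Max (r ` W) \<in> r ` W" "Min (r ` W) \<in> r ` W"
    using assms(1,2) by simp_all
  then obtain x y where "x \<in> W" "y \<in> W" "Max (r ` W) = r x" "Min (r ` W) = r y"
    by blast
  then show ?thesis using assms(3)[of x y] by (simp add: order_bw_def)
qed

lemma swap_network_order_bw_path:
  assumes "swap_network V E \<pi> Ls" "S \<in> L2_vsets V E"
  shows "order_bw \<pi> S \<le> 2 * length Ls + 2"
proof -
  obtain v1 v2 v3 where S: "S = {v1, v2, v3}" "{v1, v2} \<in> E" "{v2, v3} \<in> E"
    using assms(2) unfolding L2_vsets_def by blast
  then have m: "meets \<pi> Ls v1 v2" "meets \<pi> Ls v2 v3"
    using swap_network_meets[OF assms(1)] by auto
  have d: "\<bar>int (\<pi> v1) - int (\<pi> v2)\<bar> \<le> 2 * int (length Ls) + 2"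
    "\<bar>int (\<pi> v2) - int (\<pi> v3)\<bar> \<le> 2 * int (length Ls) + 2"
    "\<bar>int (\<pi> v1) - int (\<pi> v3)\<bar> \<le> 2 * int (length Ls) + 2"
    using meets_dist[OF m(1)] meets_dist[OF m(2)] meets_path_dist[OF m] by linarith+
  have dist: "\<bar>int (\<pi> x) - int (\<pi> y)\<bar> \<le> 2 * int (length Ls) + 2"
    if "x \<in> S" "y \<in> S" for x y
  proof -
    have "x \<in> {v1, v2, v3}" "y \<in> {v1, v2, v3}" using that S(1) by auto
    then show ?thesis using d by (auto simp: abs_minus_commute)
  qed
  show ?thesis
  proof (rule order_bw_le)
    show "finite S" "S \<noteq> {}" using S(1) by auto
    fix x y assume "x \<in> S" "y \<in> S"
    from dist[OF this] show "\<pi> x \<le> \<pi> y + (2 * length Ls + 2)" by linarith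
  qed
qed

definition path_bw :: "'a set \<Rightarrow> 'a set set \<Rightarrow> ('a \<Rightarrow> nat) \<Rightarrow> nat" where
  "path_bw V E r = Max (insert 0 {order_bw r S | S. S \<in> L2_vsets V E})"

lemma L2_vsets_subset_Pow: "finite_graph V E \<Longrightarrow> L2_vsets V E \<subseteq> Pow V - {{}}"
  by (auto simp: L2_vsets_def finite_graph_def)

lemma finite_L2_vsets: "finite_graph V E \<Longrightarrow> finite (L2_vsets V E)"
  using L2_vsets_subset_Pow by (metis finite_Diff finite_Pow_iff finite_graph_def finite_subset)

lemma path_bw_le:
  assumes "finite_graph V E" "\<And>S. S \<in> L2_vsets V E \<Longrightarrow> order_bw r S \<le> c"
  shows "path_bw V E r \<le> c"
proof -
  have "{order_bw r S | S. S \<in> L2_vsets V E} = order_bw r ` L2_vsets V E" by blast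
  then show ?thesis
    using finite_L2_vsets[OF assms(1)] assms(2) by (simp add: path_bw_def)
qed

lemma order_bw_less_card:
  assumes "is_config V r" "S \<subseteq> V" "S \<noteq> {}"
  shows "order_bw r S < card V"
proof -
  have "finite S" using assms bij_betw_finite finite_atLeastLessThan finite_subset
    unfolding is_config_def by metis
  then have "Max (r ` S) \<in> r ` S" using assms(3) by simp
  moreover have "r ` S \<subseteq> {0..<card V}"
    using assms(1,2) by (auto simp: is_config_def bij_betw_def)
  ultimately show ?thesis by (auto simp: order_bw_def)
qed

lemma bw2_le_path_bw:
  assumes "finite_graph V E" "is_config V r"
  shows "bw2 V E \<le> path_bw V E r"
proof -
  have "path_bw V E r' \<le> card V" if "is_config V r'" for r'
  proof (rule path_bw_le[OF assms(1)])
    fix S assume "S \<in> L2_vsets V E"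
    then have "S \<subseteq> V" "S \<noteq> {}" using L2_vsets_subset_Pow[OF assms(1)] by auto
    then show "order_bw r' S \<le> card V" using order_bw_less_card[OF that] by (simp add: less_imp_le)
  qed
  then have "{path_bw V E r' | r'. is_config V r'} \<subseteq> {..card V}"
    by auto
  then have "finite {path_bw V E r' | r'. is_config V r'}"
    by (rule finite_subset) simp
  then show ?thesis
    unfolding bw2_def path_bw_def[symmetric] using assms(2) by (intro Min_le) auto
qed

theorem lemma2:
  fixes V :: "'a set" and E :: "'a set set"
  assumes "finite_graph V E"
  shows "int (d_swap V E) \<ge> \<lceil>(real (bw2 V E) - 2) / 2\<rceil>"
proof -
  obtain \<pi> Ls where net: "swap_network V E \<pi> Ls" "length Ls = d_swap V E"
    using d_swap_attained[OF assms] by blast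
  then have "is_config V \<pi>" by (simp add: swap_network_def)
  then have "bw2 V E \<le> path_bw V E \<pi>"
    by (rule bw2_le_path_bw[OF assms])
  also have "\<dots> \<le> 2 * d_swap V E + 2"
    by (rule path_bw_le[OF assms]) (rule swap_network_order_bw_path[OF net(1), unfolded net(2)])
  finally have "(real (bw2 V E) - 2) / 2 \<le> real (d_swap V E)" by simp
  then show ?thesis by (simp add: ceiling_le_iff)
qed

end
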